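(* Let $\mathsf{K}$ be a quasivariety, $\mathbf{B}\in\mathsf{K}$, and $\mathbf{A}\leq\mathbf{B}$ full in $\mathsf{K}$. If $\theta,\phi\in\mathrm{Con}_{\mathsf{K}}(\mathbf{B})$ satisfy $\theta\neq\phi$ and $\theta{\upharpoonright}_A=\phi{\upharpoonright}_A$, then $\theta\cap\phi=\mathrm{id}_B$.
   Context: A quasivariety is a class of similar algebras closed under isomorphic copies, subalgebras, direct products and ultraproducts. $\mathrm{Con}_{\mathsf{K}}(\mathbf{B})$ is the set of congruences $\theta$ of $\mathbf{B}$ with $\mathbf{B}/\theta\in\mathsf{K}$; $\theta{\upharpoonright}_A=\theta\cap(A\times A)$. $\mathbf{A}\leq\mathbf{B}$ is full in $\mathsf{K}$ if it is proper, almost total ($B=\mathrm{Sg}^{\mathbf{B}}(A\cup\{b\})$ for some $b\in B$), and for every $\theta\in\mathrm{Con}_{\mathsf{K}}(\mathbf{B})$ with $\theta\neq\mathrm{id}_B$ and every $b\in B$ there is $a\in A$ with $\langle a,b\rangle\in\theta$. *)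

theory Defs
  imports Main
begin

text \<open>A signature is given by an arity function ar :: 'f => nat.\<close>

record ('a, 'f) alg =
  carrier :: "'a set"
  op :: "'f \<Rightarrow> 'a list \<Rightarrow> 'a"

definition is_algebra :: "('f \<Rightarrow> nat) \<Rightarrow> ('a, 'f) alg \<Rightarrow> bool" where
  "is_algebra ar B \<longleftrightarrow>
     (\<forall>f xs. length xs = ar f \<and> set xs \<subseteq> carrier B \<longrightarrow> op B f xs \<in> carrier B)"

definition subuniverse :: "('f \<Rightarrow> nat) \<Rightarrow> ('a, 'f) alg \<Rightarrow> 'a set \<Rightarrow> bool" where
  "subuniverse ar B S \<longleftrightarrow> S \<subseteq> carrier B \<and>
     (\<forall>f xs. length xs = ar f \<and> set xs \<subseteq> S \<longrightarrow> op B f xs \<in> S)"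

definition Sg :: "('f \<Rightarrow> nat) \<Rightarrow> ('a, 'f) alg \<Rightarrow> 'a set \<Rightarrow> 'a set" where
  "Sg ar B X = \<Inter>{S. subuniverse ar B S \<and> X \<subseteq> S}"

definition congruence :: "('f \<Rightarrow> nat) \<Rightarrow> ('a, 'f) alg \<Rightarrow> 'a rel \<Rightarrow> bool" where
  "congruence ar B \<theta> \<longleftrightarrow> equiv (carrier B) \<theta> \<and>
     (\<forall>f xs ys. length xs = ar f \<and> length ys = ar f \<and>
        set xs \<subseteq> carrier B \<and> set ys \<subseteq> carrier B \<and>
        list_all2 (\<lambda>x y. (x, y) \<in> \<theta>) xs ys \<longrightarrow> (op B f xs, op B f ys) \<in> \<theta>)"

definition quot_alg :: "('a, 'f) alg \<Rightarrow> 'a rel \<Rightarrow> ('a set, 'f) alg" where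
  "quot_alg B \<theta> = \<lparr> carrier = carrier B // \<theta>,
     op = (\<lambda>f Xs. \<theta> `` {op B f (map (\<lambda>X. SOME x. x \<in> X) Xs)}) \<rparr>"

datatype 'f trm = Var nat | App 'f "'f trm list"

fun eval :: "('a, 'f) alg \<Rightarrow> (nat \<Rightarrow> 'a) \<Rightarrow> 'f trm \<Rightarrow> 'a" where
  "eval B v (Var n) = v n"
| "eval B v (App f ts) = op B f (map (eval B v) ts)"

fun wf_trm :: "('f \<Rightarrow> nat) \<Rightarrow> 'f trm \<Rightarrow> bool" where
  "wf_trm ar (Var n) = True"
| "wf_trm ar (App f ts) = (length ts = ar f \<and> (\<forall>t \<in> set ts. wf_trm ar t))"

text \<open>A quasi-identity  p1 = q1 & ... & pn = qn ==> s = t.\<close>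
type_synonym 'f qid = "('f trm \<times> 'f trm) list \<times> ('f trm \<times> 'f trm)"

definition wf_qid :: "('f \<Rightarrow> nat) \<Rightarrow> 'f qid \<Rightarrow> bool" where
  "wf_qid ar q \<longleftrightarrow> (\<forall>(p, r) \<in> set (fst q). wf_trm ar p \<and> wf_trm ar r) \<and>
     wf_trm ar (fst (snd q)) \<and> wf_trm ar (snd (snd q))"

definition satisfies :: "('a, 'f) alg \<Rightarrow> 'f qid \<Rightarrow> bool" where
  "satisfies B q \<longleftrightarrow> (\<forall>v. range v \<subseteq> carrier B \<longrightarrow>
     (\<forall>(p, r) \<in> set (fst q). eval B v p = eval B v r) \<longrightarrow>
     eval B v (fst (snd q)) = eval B v (snd (snd q)))"

text \<open>Membership in the quasivariety K = Mod(Sigma) axiomatized by the set Sigma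
  of quasi-identities.\<close>
definition in_qvar :: "('f \<Rightarrow> nat) \<Rightarrow> 'f qid set \<Rightarrow> ('a, 'f) alg \<Rightarrow> bool" where
  "in_qvar ar \<Sigma> B \<longleftrightarrow> is_algebra ar B \<and> (\<forall>q \<in> \<Sigma>. satisfies B q)"

definition Con_K :: "('f \<Rightarrow> nat) \<Rightarrow> 'f qid set \<Rightarrow> ('a, 'f) alg \<Rightarrow> 'a rel set" where
  "Con_K ar \<Sigma> B = {\<theta>. congruence ar B \<theta> \<and> in_qvar ar \<Sigma> (quot_alg B \<theta>)}"

definition restr :: "'a rel \<Rightarrow> 'a set \<Rightarrow> 'a rel" where
  "restr \<theta> A = \<theta> \<inter> (A \<times> A)"

definition full_in :: "('f \<Rightarrow> nat) \<Rightarrow> 'f qid set \<Rightarrow> 'a set \<Rightarrow> ('a, 'f) alg \<Rightarrow> bool" where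
  "full_in ar \<Sigma> A B \<longleftrightarrow>
     subuniverse ar B A \<and> A \<noteq> carrier B \<and>
     (\<exists>b \<in> carrier B. Sg ar B (A \<union> {b}) = carrier B) \<and>
     (\<forall>\<theta> \<in> Con_K ar \<Sigma> B. \<theta> \<noteq> Id_on (carrier B) \<longrightarrow>
        (\<forall>b \<in> carrier B. \<exists>a \<in> A. (a, b) \<in> \<theta>))"

end

theory Submission
  imports Defs
begin

text \<open>A quasi-identity holds in \<open>B/\<psi>\<close> exactly when \<open>\<psi>\<close> is closed under it, and closure
  is preserved by intersections; so \<open>\<theta> \<inter> \<phi>\<close> is again a \<open>K\<close>-congruence. If it were not
  the identity, fullness would put every element of \<open>B\<close> in the \<open>\<theta> \<inter> \<phi>\<close>-class of some
  element of \<open>A\<close>. Then \<open>b \<theta> c\<close> iff \<open>a \<theta> a'\<close> for the corresponding \<open>a, a' \<in> A\<close>, and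
  likewise for \<open>\<phi>\<close>, so equal restrictions to \<open>A\<close> would force \<open>\<theta> = \<phi>\<close>.\<close>

lemma some_in_equiv_class:
  assumes "equiv S r" "x \<in> S"
  shows "(SOME y. y \<in> r `` {x}) \<in> S" "((SOME y. y \<in> r `` {x}), x) \<in> r"
proof -
  have "(x, SOME y. y \<in> r `` {x}) \<in> r"
    using assms equiv_class_self by (metis Image_singleton_iff someI)
  then show "((SOME y. y \<in> r `` {x}), x) \<in> r" "(SOME y. y \<in> r `` {x}) \<in> S"
    using assms(1) by (auto elim: equivE dest: symD)
qed

lemma all_quotient_valuations_iff:
  fixes P :: "('i \<Rightarrow> 'a set) \<Rightarrow> bool"
  shows "(\<forall>v. range v \<subseteq> S // r \<longrightarrow> P v) \<longleftrightarrow> (\<forall>w. range w \<subseteq> S \<longrightarrow> P (\<lambda>n. r `` {w n}))"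
proof (intro iffI allI impI)
  fix w :: "'i \<Rightarrow> 'a" assume "\<forall>v. range v \<subseteq> S // r \<longrightarrow> P v" "range w \<subseteq> S"
  moreover have "range (\<lambda>n. r `` {w n}) \<subseteq> S // r"
    using \<open>range w \<subseteq> S\<close> by (auto intro: quotientI)
  ultimately show "P (\<lambda>n. r `` {w n})" by blast
next
  fix v :: "'i \<Rightarrow> 'a set" assume P: "\<forall>w. range w \<subseteq> S \<longrightarrow> P (\<lambda>n. r `` {w n})" and "range v \<subseteq> S // r"
  then have "v n \<in> S // r" for n by blast
  then have "\<forall>n. \<exists>x. x \<in> S \<and> v n = r `` {x}"
    by (meson quotientE)
  from choice[OF this] obtain w where "\<forall>n. w n \<in> S \<and> v n = r `` {w n}" ..
  then have "range w \<subseteq> S" "v = (\<lambda>n. r `` {w n})" by (auto simp: fun_eq_iff)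
  then show "P v" using P by simp
qed

lemma eval_in_carrier:
  assumes "is_algebra ar B" "range w \<subseteq> carrier B" "wf_trm ar t"
  shows "eval B w t \<in> carrier B"
  using assms(3)
proof (induction t)
  case (App f ts)
  then show ?case using assms(1,2) unfolding is_algebra_def by (simp add: image_subset_iff)
qed (use assms in auto)

lemma congruence_equiv: "congruence ar B \<psi> \<Longrightarrow> equiv (carrier B) \<psi>"
  unfolding congruence_def by blast

lemma eval_quot_alg:
  assumes "congruence ar B \<psi>" "is_algebra ar B" "range w \<subseteq> carrier B" "wf_trm ar t"
  shows "eval (quot_alg B \<psi>) (\<lambda>n. \<psi> `` {w n}) t = \<psi> `` {eval B w t}"
  using assms(4)
proof (induction t)
  case (Var n)
  then show ?case by simp
next
  case (App f ts)
  have eq: "equiv (carrier B) \<psi>" using assms(1) by (rule congruence_equiv)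
  define rep where "rep x = (SOME y. y \<in> \<psi> `` {x})" for x
  define ys where "ys = map (eval B w) ts"
  have ys: "set ys \<subseteq> carrier B" "length ys = ar f"
    using App.prems eval_in_carrier[OF assms(2,3)] unfolding ys_def by auto
  then have "\<forall>y \<in> set ys. rep y \<in> carrier B \<and> (rep y, y) \<in> \<psi>"
    using some_in_equiv_class[OF eq] unfolding rep_def by blast
  then have "set (map rep ys) \<subseteq> carrier B" "list_all2 (\<lambda>x y. (x, y) \<in> \<psi>) (map rep ys) ys"
    by (auto simp: list_all2_map1 list_all2_same)
  then have "(op B f (map rep ys), op B f ys) \<in> \<psi>"
    using assms(1) ys unfolding congruence_def by simp
  moreover have "eval (quot_alg B \<psi>) (\<lambda>n. \<psi> `` {w n}) (App f ts) = \<psi> `` {op B f (map rep ys)}"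
    using App by (simp add: quot_alg_def rep_def ys_def comp_def cong: map_cong)
  ultimately show ?case using eq by (simp add: equiv_class_eq ys_def)
qed

definition closed_under_qid :: "('a, 'f) alg \<Rightarrow> 'a rel \<Rightarrow> 'f qid \<Rightarrow> bool" where
  "closed_under_qid B \<psi> q \<longleftrightarrow> (\<forall>w. range w \<subseteq> carrier B \<longrightarrow>
     (\<forall>(p, r) \<in> set (fst q). (eval B w p, eval B w r) \<in> \<psi>) \<longrightarrow>
     (eval B w (fst (snd q)), eval B w (snd (snd q))) \<in> \<psi>)"

lemma satisfies_quot_alg_iff:
  fixes B :: "('a, 'f) alg"
  assumes "congruence ar B \<psi>" "is_algebra ar B" "wf_qid ar q"
  shows "satisfies (quot_alg B \<psi>) q \<longleftrightarrow> closed_under_qid B \<psi> q"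
proof -
  have eq: "equiv (carrier B) \<psi>" using assms(1) by (rule congruence_equiv)
  let ?ev = "\<lambda>w. eval (quot_alg B \<psi>) (\<lambda>n. \<psi> `` {w n})"
  have class_eq_iff: "?ev w t = ?ev w u \<longleftrightarrow> (eval B w t, eval B w u) \<in> \<psi>"
    if "range w \<subseteq> carrier B" "wf_trm ar t" "wf_trm ar u" for w t u
    using that eval_quot_alg[OF assms(1,2)] eval_in_carrier[OF assms(2)] eq_equiv_class_iff[OF eq]
    by simp
  have wf: "\<forall>(p, r) \<in> set (fst q). wf_trm ar p \<and> wf_trm ar r"
    "wf_trm ar (fst (snd q))" "wf_trm ar (snd (snd q))"
    using assms(3) unfolding wf_qid_def by auto
  have carrier_quot: "carrier (quot_alg B \<psi>) = carrier B // \<psi>"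
    by (simp add: quot_alg_def)
  have "satisfies (quot_alg B \<psi>) q \<longleftrightarrow> (\<forall>w. range w \<subseteq> carrier B \<longrightarrow>
      (\<forall>(p, r) \<in> set (fst q). ?ev w p = ?ev w r) \<longrightarrow> ?ev w (fst (snd q)) = ?ev w (snd (snd q)))"
    unfolding satisfies_def carrier_quot by (rule all_quotient_valuations_iff)
  also have "\<dots> \<longleftrightarrow> closed_under_qid B \<psi> q"
    unfolding closed_under_qid_def
  proof (intro all_cong imp_cong refl)
    fix w :: "nat \<Rightarrow> 'a" assume w: "range w \<subseteq> carrier B"
    show "(\<forall>(p, r) \<in> set (fst q). ?ev w p = ?ev w r) \<longleftrightarrow>
        (\<forall>(p, r) \<in> set (fst q). (eval B w p, eval B w r) \<in> \<psi>)"
    proof (rule ball_cong[OF refl])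
      fix x assume x: "x \<in> set (fst q)"
      obtain p r where x_eq: "x = (p, r)" by (cases x)
      with x wf(1) have "wf_trm ar p" "wf_trm ar r" by auto
      then show "(case x of (p, r) \<Rightarrow> ?ev w p = ?ev w r) \<longleftrightarrow>
          (case x of (p, r) \<Rightarrow> (eval B w p, eval B w r) \<in> \<psi>)"
        using class_eq_iff[OF w] x_eq by simp
    qed
    show "?ev w (fst (snd q)) = ?ev w (snd (snd q)) \<longleftrightarrow>
        (eval B w (fst (snd q)), eval B w (snd (snd q))) \<in> \<psi>"
      using class_eq_iff[OF w wf(2,3)] .
  qed
  finally show ?thesis .
qed

lemma Con_K_congruence: "\<psi> \<in> Con_K ar \<Sigma> B \<Longrightarrow> congruence ar B \<psi>"
  unfolding Con_K_def by blast

lemma quot_alg_is_algebra: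
  assumes "congruence ar B \<psi>" "is_algebra ar B"
  shows "is_algebra ar (quot_alg B \<psi>)"
  unfolding is_algebra_def
proof (intro allI impI)
  fix f Xs assume Xs: "length Xs = ar f \<and> set Xs \<subseteq> carrier (quot_alg B \<psi>)"
  have "(SOME x. x \<in> X) \<in> carrier B" if "X \<in> carrier B // \<psi>" for X
    using that some_in_equiv_class(1)[OF congruence_equiv[OF assms(1)]] by (auto elim: quotientE)
  then have "set (map (\<lambda>X. SOME x. x \<in> X) Xs) \<subseteq> carrier B"
    using Xs by (auto simp: quot_alg_def)
  then have "op B f (map (\<lambda>X. SOME x. x \<in> X) Xs) \<in> carrier B"
    using assms(2) Xs unfolding is_algebra_def by simp
  then show "op (quot_alg B \<psi>) f Xs \<in> carrier (quot_alg B \<psi>)"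
    by (simp add: quot_alg_def quotientI)
qed

lemma equiv_Int: "equiv S r \<Longrightarrow> equiv S s \<Longrightarrow> equiv S (r \<inter> s)"
  unfolding equiv_def refl_on_def sym_def trans_def by blast

lemma congruence_Int:
  assumes "congruence ar B \<theta>" "congruence ar B \<phi>"
  shows "congruence ar B (\<theta> \<inter> \<phi>)"
  unfolding congruence_def
proof (intro conjI allI impI)
  show "equiv (carrier B) (\<theta> \<inter> \<phi>)"
    using assms by (simp add: congruence_equiv equiv_Int)
next
  fix f xs ys
  assume h: "length xs = ar f \<and> length ys = ar f \<and> set xs \<subseteq> carrier B \<and> set ys \<subseteq> carrier B \<and>
    list_all2 (\<lambda>x y. (x, y) \<in> \<theta> \<inter> \<phi>) xs ys"
  then have "list_all2 (\<lambda>x y. (x, y) \<in> \<theta>) xs ys" "list_all2 (\<lambda>x y. (x, y) \<in> \<phi>) xs ys"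
    by (auto elim: list_all2_mono)
  then show "(op B f xs, op B f ys) \<in> \<theta> \<inter> \<phi>"
    using assms h unfolding congruence_def by blast
qed

lemma closed_under_qid_Int:
  "closed_under_qid B \<theta> q \<Longrightarrow> closed_under_qid B \<phi> q \<Longrightarrow> closed_under_qid B (\<theta> \<inter> \<phi>) q"
  unfolding closed_under_qid_def by fast

lemma Con_K_Int:
  assumes "\<forall>q \<in> \<Sigma>. wf_qid ar q" "is_algebra ar B"
    and "\<theta> \<in> Con_K ar \<Sigma> B" "\<phi> \<in> Con_K ar \<Sigma> B"
  shows "\<theta> \<inter> \<phi> \<in> Con_K ar \<Sigma> B"
proof -
  have \<theta>: "congruence ar B \<theta>" "\<forall>q \<in> \<Sigma>. satisfies (quot_alg B \<theta>) q"
    and \<phi>: "congruence ar B \<phi>" "\<forall>q \<in> \<Sigma>. satisfies (quot_alg B \<phi>) q"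
    using assms(3,4) unfolding Con_K_def in_qvar_def by auto
  have \<theta>\<phi>: "congruence ar B (\<theta> \<inter> \<phi>)"
    using \<theta>(1) \<phi>(1) by (rule congruence_Int)
  have "satisfies (quot_alg B (\<theta> \<inter> \<phi>)) q" if q: "q \<in> \<Sigma>" for q
  proof -
    have "wf_qid ar q" using q assms(1) by blast
    moreover have "closed_under_qid B \<theta> q" "closed_under_qid B \<phi> q"
      using \<theta> \<phi> q \<open>wf_qid ar q\<close> satisfies_quot_alg_iff[OF _ assms(2)] by blast+
    ultimately show ?thesis
      by (simp add: satisfies_quot_alg_iff[OF \<theta>\<phi> assms(2)] closed_under_qid_Int)
  qed
  then show ?thesis
    using \<theta>\<phi> quot_alg_is_algebra[OF \<theta>\<phi> assms(2)] unfolding Con_K_def in_qvar_def by blast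
qed

lemma equiv_related_iff:
  assumes "equiv S r" "(a, b) \<in> r" "(a', c) \<in> r"
  shows "(b, c) \<in> r \<longleftrightarrow> (a, a') \<in> r"
proof -
  have "r `` {b} = r `` {a}" "r `` {c} = r `` {a'}" "a \<in> S" "b \<in> S" "a' \<in> S" "c \<in> S"
    using assms(2,3) equiv_class_eq_iff[OF assms(1)] by auto
  then show ?thesis
    by (simp add: equiv_class_eq_iff[OF assms(1)])
qed

lemma equiv_subset_if_restr_subset:
  assumes "equiv S \<theta>" "equiv S \<phi>"
    and cover: "\<forall>b \<in> S. \<exists>a \<in> A. (a, b) \<in> \<theta> \<inter> \<phi>"
    and "restr \<theta> A \<subseteq> restr \<phi> A"
  shows "\<theta> \<subseteq> \<phi>"
proof clarify
  fix b c assume bc: "(b, c) \<in> \<theta>"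
  then have "b \<in> S" "c \<in> S" using equiv_type[OF assms(1)] by auto
  then obtain a a' where a: "a \<in> A" "(a, b) \<in> \<theta> \<inter> \<phi>" and a': "a' \<in> A" "(a', c) \<in> \<theta> \<inter> \<phi>"
    using cover by blast
  have "(a, a') \<in> \<theta>"
    using equiv_related_iff[OF assms(1)] a(2) a'(2) bc by blast
  then have "(a, a') \<in> \<phi>"
    using assms(4) a(1) a'(1) unfolding restr_def by blast
  then show "(b, c) \<in> \<phi>"
    using equiv_related_iff[OF assms(2)] a(2) a'(2) by blast
qed

theorem mainTheorem5:
  fixes ar :: "'f \<Rightarrow> nat" and \<Sigma> :: "'f qid set"
    and B :: "('a, 'f) alg" and A :: "'a set" and \<theta> \<phi> :: "'a rel"
  assumes "\<forall>q \<in> \<Sigma>. wf_qid ar q"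
    and "in_qvar ar \<Sigma> B"
    and "full_in ar \<Sigma> A B"
    and "\<theta> \<in> Con_K ar \<Sigma> B" and "\<phi> \<in> Con_K ar \<Sigma> B"
    and "\<theta> \<noteq> \<phi>"
    and "restr \<theta> A = restr \<phi> A"
  shows "\<theta> \<inter> \<phi> = Id_on (carrier B)"
proof (rule ccontr)
  assume nontrivial: "\<theta> \<inter> \<phi> \<noteq> Id_on (carrier B)"
  have "is_algebra ar B" using assms(2) unfolding in_qvar_def by blast
  then have meet: "\<theta> \<inter> \<phi> \<in> Con_K ar \<Sigma> B" using Con_K_Int assms(1,4,5) by blast
  have full: "\<forall>\<psi> \<in> Con_K ar \<Sigma> B. \<psi> \<noteq> Id_on (carrier B) \<longrightarrow> (\<forall>b \<in> carrier B. \<exists>a \<in> A. (a, b) \<in> \<psi>)"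
    using assms(3) unfolding full_in_def by (elim conjE)
  have cover: "\<forall>b \<in> carrier B. \<exists>a \<in> A. (a, b) \<in> \<theta> \<inter> \<phi>"
    using mp[OF bspec[OF full meet] nontrivial] .
  have \<theta>: "equiv (carrier B) \<theta>" and \<phi>: "equiv (carrier B) \<phi>"
    using assms(4,5) Con_K_congruence congruence_equiv by blast+
  have "\<theta> \<subseteq> \<phi>"
    using equiv_subset_if_restr_subset[OF \<theta> \<phi> cover] assms(7) by simp
  moreover have "\<phi> \<subseteq> \<theta>"
    using equiv_subset_if_restr_subset[OF \<phi> \<theta>] cover assms(7) by (simp add: Int_commute)
  ultimately have "\<theta> = \<phi>" by (rule subset_antisym)
  with assms(6) show False by contradiction
qed

end
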